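(* Let $\Gamma$ be a connected signed graph. Then all roots of the polynomial $t\mapsto\mathcal{M}(\Gamma(t))$ are real and non-negative.
   Context: A signed graph $\Gamma$ is a finite simple undirected graph with vertex set $\{1,\dots,N\}$ in which every edge $\{i,j\}$ carries a nonzero real weight $\gamma_{ij}$, which may be of either sign. For real $t$, $\Gamma(t)$ is the weighted graph with the same edges as $\Gamma$ and weights $\gamma_{ij}(t)=\gamma_{ij}$ if $\gamma_{ij}>0$ and $\gamma_{ij}(t)=t\gamma_{ij}$ if $\gamma_{ij}<0$. For a weighted graph $H$, $\mathcal{M}(H)=\sum_{T}\prod_{e\in E(T)}w_H(e)$, the sum over all spanning trees $T$ of $H$ of the product of the edge weights $w_H(e)$; thus $\mathcal{M}(\Gamma(t))$ is a polynomial in $t$. Equivalently $\mathcal{M}(H)=\frac{(-1)^{n-1}}{n}\prod_{i=2}^n\lambda_i$, where $n=|V(H)|$ and $\lambda_1=0,\lambda_2,\dots,\lambda_n$ are the eigenvalues of the Laplacian of $H$ (off-diagonal entries the weights, diagonal entries minus the row sums of the weights). *)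

theory Defs
  imports Complex_Main "HOL-Computational_Algebra.Polynomial"
begin

definition signed_graph :: "nat \<Rightarrow> nat set set \<Rightarrow> (nat set \<Rightarrow> real) \<Rightarrow> bool" where
  "signed_graph N E \<gamma> \<longleftrightarrow>
     (\<forall>e\<in>E. \<exists>i j. e = {i, j} \<and> i \<noteq> j \<and> i \<in> {1..N} \<and> j \<in> {1..N}) \<and>
     (\<forall>e\<in>E. \<gamma> e \<noteq> 0)"

definition edge_rel :: "nat set set \<Rightarrow> (nat \<times> nat) set" where
  "edge_rel T = {(i, j). {i, j} \<in> T}"

definition connected_on :: "nat \<Rightarrow> nat set set \<Rightarrow> bool" where
  "connected_on N T \<longleftrightarrow> (\<forall>i\<in>{1..N}. \<forall>j\<in>{1..N}. (i, j) \<in> (edge_rel T)\<^sup>*)"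

definition spanning_trees :: "nat \<Rightarrow> nat set set \<Rightarrow> nat set set set" where
  "spanning_trees N E = {T. T \<subseteq> E \<and> connected_on N T \<and> card T = N - 1}"

definition M :: "nat \<Rightarrow> nat set set \<Rightarrow> (nat set \<Rightarrow> 'a::comm_ring_1) \<Rightarrow> 'a" where
  "M N E w = (\<Sum>T\<in>spanning_trees N E. \<Prod>e\<in>T. w e)"

definition Gamma_t_weight :: "(nat set \<Rightarrow> real) \<Rightarrow> nat set \<Rightarrow> real poly" where
  "Gamma_t_weight \<gamma> e = (if \<gamma> e > 0 then [:\<gamma> e:] else [:0, \<gamma> e:])"

definition M_Gamma_poly :: "nat \<Rightarrow> nat set set \<Rightarrow> (nat set \<Rightarrow> real) \<Rightarrow> real poly" where
  "M_Gamma_poly N E \<gamma> = M N E (Gamma_t_weight \<gamma>)"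

end

theory Submission
  imports Defs "Jordan_Normal_Form.Char_Poly"
begin

text \<open>If a root z of t -> M(Gamma(t)) is not a non-negative real, some c has Re c > 0 and
  Re (c z) < 0 (take c = |z| - conj z).  Multiplying every weight of Gamma(z) by c multiplies M by
  c^(N-1) and produces weights with positive real part, for which M cannot vanish on a connected graph.
  Indeed, by the weighted matrix-tree theorem (Cauchy-Binet, together with the fact that an n x n minor
  of the reduced incidence matrix D is 0 or +-1 according as its edges form a spanning tree)
  M = det (D W D^T); and D W D^T v = 0 forces sum_e w_e |(D^T v)_e|^2 = 0, hence D^T v = 0:
  v is a potential that is constant along the edges and vanishes at the grounded vertex, so v = 0.\<close>

section \<open>The Cauchy-Binet formula\<close>

definition col_submat :: "'a mat \<Rightarrow> nat \<Rightarrow> (nat \<Rightarrow> nat) \<Rightarrow> 'a mat" where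
  "col_submat A n g = mat n n (\<lambda>(i, j). A $$ (i, g j))"

definition row_submat :: "'a mat \<Rightarrow> nat \<Rightarrow> (nat \<Rightarrow> nat) \<Rightarrow> 'a mat" where
  "row_submat C n g = mat n n (\<lambda>(i, j). C $$ (g i, j))"

lemma bij_betw_perms_injections_onto:
  fixes n :: nat
  assumes g: "bij_betw g {0..<n} K"
  shows "bij_betw (\<lambda>p i. if i < n then g (p i) else i) {p. p permutes {0..<n}}
           {f. (\<forall>i. i \<notin> {0..<n} \<longrightarrow> f i = i) \<and> inj_on f {0..<n} \<and> f ` {0..<n} = K}"
proof (rule bij_betw_byWitness[where f' = "\<lambda>f i. if i < n then inv_into {0..<n} g (f i) else i"])
  let ?j = "\<lambda>p i. if i < n then g (p i) else i"
  let ?i = "\<lambda>f i. if i < n then inv_into {0..<n} g (f i) else i"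
  have ginj: "inj_on g {0..<n}" and gim: "g ` {0..<n} = K"
    using g by (auto simp: bij_betw_def)
  show "\<forall>p\<in>{p. p permutes {0..<n}}. ?i (?j p) = p"
  proof (intro ballI ext)
    fix p i assume "p \<in> {p. p permutes {0..<n}}"
    then have p: "p permutes {0..<n}" by simp
    show "?i (?j p) i = p i"
    proof (cases "i < n")
      case True
      then have "p i \<in> {0..<n}" using permutes_in_image[OF p] by simp
      then show ?thesis using True inv_into_f_f[OF ginj] by simp
    qed (simp add: permutes_not_in[OF p])
  qed
  show "\<forall>f\<in>{f. (\<forall>i. i \<notin> {0..<n} \<longrightarrow> f i = i) \<and> inj_on f {0..<n} \<and> f ` {0..<n} = K}. ?j (?i f) = f"
  proof (intro ballI ext)
    fix f i assume f: "f \<in> {f. (\<forall>i. i \<notin> {0..<n} \<longrightarrow> f i = i) \<and> inj_on f {0..<n} \<and> f ` {0..<n} = K}"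
    show "?j (?i f) i = f i"
    proof (cases "i < n")
      case True
      then have "f i \<in> g ` {0..<n}" using f gim by auto
      then show ?thesis using True f_inv_into_f[of "f i" g "{0..<n}"] by simp
    qed (use f in simp)
  qed
  show "?j ` {p. p permutes {0..<n}}
          \<subseteq> {f. (\<forall>i. i \<notin> {0..<n} \<longrightarrow> f i = i) \<and> inj_on f {0..<n} \<and> f ` {0..<n} = K}"
  proof
    fix f assume "f \<in> ?j ` {p. p permutes {0..<n}}"
    then obtain p where p: "p permutes {0..<n}" and f: "f = ?j p" by auto
    have "?j p ` {0..<n} = g ` p ` {0..<n}" by (auto simp: image_def)
    then have "?j p ` {0..<n} = K" using permutes_image[OF p] gim by simp
    moreover have "inj_on (?j p) {0..<n}"
    proof (rule inj_onI)
      fix x y assume "x \<in> {0..<n}" "y \<in> {0..<n}" "?j p x = ?j p y"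
      then have "g (p x) = g (p y)" "p x \<in> {0..<n}" "p y \<in> {0..<n}"
        using permutes_in_image[OF p] by auto
      then have "p x = p y" using ginj by (auto dest: inj_onD)
      then show "x = y" using permutes_inj[OF p] by (auto dest: injD)
    qed
    ultimately show "f \<in> {f. (\<forall>i. i \<notin> {0..<n} \<longrightarrow> f i = i) \<and> inj_on f {0..<n} \<and> f ` {0..<n} = K}"
      using f by simp
  qed
  show "?i ` {f. (\<forall>i. i \<notin> {0..<n} \<longrightarrow> f i = i) \<and> inj_on f {0..<n} \<and> f ` {0..<n} = K}
          \<subseteq> {p. p permutes {0..<n}}"
  proof
    fix p assume "p \<in> ?i ` {f. (\<forall>i. i \<notin> {0..<n} \<longrightarrow> f i = i) \<and> inj_on f {0..<n} \<and> f ` {0..<n} = K}"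
    then obtain f where f: "inj_on f {0..<n}" "f ` {0..<n} = K" and p: "p = ?i f" by auto
    have "bij_betw f {0..<n} K" using f by (simp add: bij_betw_def)
    then have "bij_betw (inv_into {0..<n} g \<circ> f) {0..<n} {0..<n}"
      using bij_betw_inv_into[OF g] by (rule bij_betw_trans)
    then have "bij_betw (?i f) {0..<n} {0..<n}"
      by (rule bij_betw_cong[THEN iffD1, rotated]) simp
    then show "p \<in> {p. p permutes {0..<n}}" unfolding p mem_Collect_eq by (rule bij_imp_permutes) simp
  qed
qed

lemma cauchy_binet_fibre:
  fixes A C :: "'a::comm_ring_1 mat"
  assumes C: "C \<in> carrier_mat m n" and g: "bij_betw g {0..<n} K"
  shows "(\<Sum>f | (\<forall>i. i \<notin> {0..<n} \<longrightarrow> f i = i) \<and> inj_on f {0..<n} \<and> f ` {0..<n} = K.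
            (\<Prod>i = 0..<n. A $$ (i, f i)) * det (row_submat C n f))
         = det (col_submat A n g) * det (row_submat C n g)"
proof -
  let ?j = "\<lambda>p i. if i < n then g (p i) else i"
  let ?Q = "\<lambda>f. (\<Prod>i = 0..<n. A $$ (i, f i)) * det (row_submat C n f)"
  have "(\<Sum>f | (\<forall>i. i \<notin> {0..<n} \<longrightarrow> f i = i) \<and> inj_on f {0..<n} \<and> f ` {0..<n} = K. ?Q f)
      = (\<Sum>p | p permutes {0..<n}. ?Q (?j p))"
    by (rule sum.reindex_bij_betw[OF bij_betw_perms_injections_onto[OF g], symmetric])
  also have "\<dots> = (\<Sum>p | p permutes {0..<n}.
      det (row_submat C n g) * (signof p * (\<Prod>i = 0..<n. col_submat A n g $$ (i, p i))))"
  proof (rule sum.cong[OF refl])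
    fix p assume "p \<in> {p. p permutes {0..<n}}"
    then have p: "p permutes {0..<n}" by simp
    have pU: "\<And>i. i < n \<Longrightarrow> p i < n" using permutes_in_image[OF p] by auto
    have "row_submat C n (?j p) = mat n n (\<lambda>(i, j). row_submat C n g $$ (p i, j))"
      by (rule eq_matI) (auto simp: row_submat_def pU)
    then have "det (row_submat C n (?j p)) = signof p * det (row_submat C n g)"
      using det_permute_rows[OF _ p, of "row_submat C n g"] by (simp add: row_submat_def)
    moreover have "(\<Prod>i = 0..<n. A $$ (i, ?j p i)) = (\<Prod>i = 0..<n. col_submat A n g $$ (i, p i))"
      by (rule prod.cong) (auto simp: col_submat_def pU)
    ultimately show "?Q (?j p) = det (row_submat C n g) * (signof p * (\<Prod>i = 0..<n. col_submat A n g $$ (i, p i)))"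
      by (simp add: ac_simps)
  qed
  also have "\<dots> = det (row_submat C n g) * det (col_submat A n g)"
    unfolding sum_distrib_left[symmetric] by (subst det_def'[of _ n]) (auto simp: col_submat_def)
  finally show ?thesis by (simp add: ac_simps)
qed

theorem cauchy_binet:
  fixes A C :: "'a::comm_ring_1 mat"
  assumes A: "A \<in> carrier_mat n m" and C: "C \<in> carrier_mat m n"
  shows "det (A * C) = (\<Sum>K | K \<subseteq> {0..<m} \<and> card K = n.
            det (col_submat A n ((!) (sorted_list_of_set K))) * det (row_submat C n ((!) (sorted_list_of_set K))))"
proof -
  let ?F = "{f. (\<forall>i\<in>{0..<n}. f i \<in> {0..<m}) \<and> (\<forall>i. i \<notin> {0..<n} \<longrightarrow> f i = i)}"
  let ?I = "{f \<in> ?F. inj_on f {0..<n}}"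
  let ?Ks = "{K. K \<subseteq> {0..<m} \<and> card K = n}"
  let ?Q = "\<lambda>f. (\<Prod>i = 0..<n. A $$ (i, f i)) * det (row_submat C n f)"
  have fin: "finite ?F" by (rule finite_bounded_functions) auto
  have expand: "det (mat\<^sub>r n n (\<lambda>i. A $$ (i, f i) \<cdot>\<^sub>v row C (f i))) = ?Q f" if "f \<in> ?F" for f
  proof -
    have "mat\<^sub>r n n (\<lambda>i. row C (f i)) = row_submat C n f"
      by (rule eq_matI) (use C that in \<open>auto simp: row_submat_def\<close>)
    then show ?thesis using det_rows_mul[of "\<lambda>i. row C (f i)" n] C by auto
  qed
  have non_inj: "?Q f = 0" if "f \<in> ?F - ?I" for f
  proof -
    from that obtain i j where "i < n" "j < n" "i \<noteq> j" "f i = f j"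
      unfolding inj_on_def by auto
    then have "det (row_submat C n f) = 0"
      by (intro det_identical_rows[of _ n i j]) (auto simp: row_submat_def)
    then show ?thesis by simp
  qed
  have "det (A * C) = (\<Sum>f\<in>?F. ?Q f)"
    unfolding mat_mul_finsum_alt[OF A C]
    by (subst det_linear_rows_sum) (use C expand in auto)
  also have "\<dots> = (\<Sum>f\<in>?I. ?Q f)"
    by (rule sum.mono_neutral_right[OF fin]) (use non_inj in auto)
  also have "\<dots> = (\<Sum>K\<in>?Ks. \<Sum>f | f \<in> ?I \<and> f ` {0..<n} = K. ?Q f)"
  proof (rule sum.group[symmetric])
    show "finite ?I" using fin by (rule finite_subset[rotated]) auto
    show "finite ?Ks" by (rule finite_subset[of _ "Pow {0..<m}"]) auto
  qed (auto simp: card_image)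
  also have "\<dots> = (\<Sum>K\<in>?Ks. det (col_submat A n ((!) (sorted_list_of_set K)))
                              * det (row_submat C n ((!) (sorted_list_of_set K))))"
  proof (rule sum.cong[OF refl])
    fix K assume K: "K \<in> ?Ks"
    then have "finite K" by (auto intro: finite_subset)
    then have "bij_betw ((!) (sorted_list_of_set K)) {0..<n} K"
      using K by (auto simp: bij_betw_nth atLeast0LessThan)
    moreover have "{f. f \<in> ?I \<and> f ` {0..<n} = K}
        = {f. (\<forall>i. i \<notin> {0..<n} \<longrightarrow> f i = i) \<and> inj_on f {0..<n} \<and> f ` {0..<n} = K}"
      using K by blast
    ultimately show "(\<Sum>f | f \<in> ?I \<and> f ` {0..<n} = K. ?Q f)
        = det (col_submat A n ((!) (sorted_list_of_set K))) * det (row_submat C n ((!) (sorted_list_of_set K)))"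
      using cauchy_binet_fibre[OF C] by simp
  qed
  finally show ?thesis .
qed

section \<open>Determinants of diagonal and incidence-like matrices\<close>

lemma det_mat_diag: "det (mat_diag n f) = (\<Prod>i = 0..<n. f i)"
  by (subst det_upper_triangular[of _ n]) (auto simp: mat_diag_def upper_triangular_def prod_list_diag_prod)

lemma det_eq_0_iff_transpose_kernel:
  fixes A :: "'a::idom mat"
  assumes A: "A \<in> carrier_mat n n"
  shows "det A = 0 \<longleftrightarrow> (\<exists>v. v \<in> carrier_vec n \<and> v \<noteq> 0\<^sub>v n \<and> transpose_mat A *\<^sub>v v = 0\<^sub>v n)"
proof -
  have "transpose_mat A \<in> carrier_mat n n" using A by simp
  from det_0_iff_vec_prod_zero[OF this] show ?thesis unfolding det_transpose[OF A] .
qed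

lemma det_eq_0_if_col_sums_0:
  fixes A :: "'a::idom mat"
  assumes A: "A \<in> carrier_mat n n" and "0 < n" and col_sums: "\<forall>j<n. (\<Sum>i<n. A $$ (i, j)) = 0"
  shows "det A = 0"
proof -
  let ?v = "vec n (\<lambda>_. 1::'a)"
  have "transpose_mat A *\<^sub>v ?v = 0\<^sub>v n"
    using A col_sums by (auto simp: scalar_prod_def lessThan_atLeast0 intro!: eq_vecI sum.cong)
  moreover have "?v \<noteq> 0\<^sub>v n"
    using \<open>0 < n\<close> by (metis index_vec index_zero_vec(1) zero_neq_one)
  ultimately show ?thesis
    using det_eq_0_iff_transpose_kernel[OF A] vec_carrier by blast
qed

definition incidence_like :: "'a::ring_1 mat \<Rightarrow> bool" where
  "incidence_like A \<longleftrightarrow>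
     (\<forall>i<dim_row A. \<forall>j<dim_col A. A $$ (i, j) \<in> {0, 1, -1}) \<and>
     (\<forall>j<dim_col A. \<forall>i<dim_row A. \<forall>i'<dim_row A. A $$ (i, j) = A $$ (i', j) \<longrightarrow> A $$ (i, j) \<noteq> 0 \<longrightarrow> i = i')"

lemma incidence_like_entry:
  "incidence_like A \<Longrightarrow> i < dim_row A \<Longrightarrow> j < dim_col A \<Longrightarrow> A $$ (i, j) \<in> {0, 1, -1}"
  unfolding incidence_like_def by blast

lemma incidence_like_unique:
  "incidence_like A \<Longrightarrow> A $$ (i, j) = A $$ (i', j) \<Longrightarrow> A $$ (i, j) \<noteq> 0 \<Longrightarrow>
    i < dim_row A \<Longrightarrow> i' < dim_row A \<Longrightarrow> j < dim_col A \<Longrightarrow> i = i'"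
  unfolding incidence_like_def by blast

lemma incidence_like_mat_delete:
  assumes A: "A \<in> carrier_mat (Suc n) (Suc n)" and "incidence_like A" and "i < Suc n" "j < Suc n"
  shows "incidence_like (mat_delete A i j)"
proof -
  have entry: "mat_delete A i j $$ (a, b) = A $$ (insert_index i a, insert_index j b)" if "a < n" "b < n" for a b
    using mat_delete_index[OF A \<open>i < Suc n\<close> \<open>j < Suc n\<close> that] by simp
  have bound: "insert_index k a < Suc n" if "a < n" for k a
    using that by (simp add: insert_index_def)
  have inj: "a = a'" if "insert_index i a = insert_index i a'" for a a'
    using arg_cong[OF that, of "delete_index i"] by simp
  have dims: "dim_row (mat_delete A i j) = n" "dim_col (mat_delete A i j) = n" "dim_row A = Suc n" "dim_col A = Suc n"
    using A by auto
  show ?thesis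
    unfolding incidence_like_def dims
  proof (intro conjI allI impI)
    fix a b assume ab: "a < n" "b < n"
    show "mat_delete A i j $$ (a, b) \<in> {0, 1, -1}"
      unfolding entry[OF ab] using incidence_like_entry[OF assms(2)] bound[OF ab(1)] bound[OF ab(2)] dims by simp
  next
    fix b a a' assume b: "b < n" and a: "a < n" "a' < n"
      and eq: "mat_delete A i j $$ (a, b) = mat_delete A i j $$ (a', b)"
      and nz: "mat_delete A i j $$ (a, b) \<noteq> 0"
    have "insert_index i a = insert_index i a'"
      using incidence_like_unique[OF assms(2), of "insert_index i a" "insert_index j b" "insert_index i a'"]
        eq nz bound a b dims unfolding entry[OF a(1) b] entry[OF a(2) b] by simp
    then show "a = a'" by (rule inj)
  qed
qed

lemma incidence_like_col_sum_eq_0: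
  assumes "incidence_like A" and A: "A \<in> carrier_mat n n" and j: "j < n"
    and ii': "i < n" "i' < n" "i \<noteq> i'" "A $$ (i, j) \<noteq> 0" "A $$ (i', j) \<noteq> 0"
  shows "(\<Sum>k<n. A $$ (k, j)) = 0"
proof -
  have entries: "A $$ (k, j) \<in> {1, -1}" if "k < n" "A $$ (k, j) \<noteq> 0" for k
    using incidence_like_entry[OF assms(1), of k j] A that j by auto
  have unique: "k = l" if "A $$ (k, j) = A $$ (l, j)" "A $$ (k, j) \<noteq> 0" "k < n" "l < n" for k l
    using incidence_like_unique[OF assms(1) that(1,2)] A that j by auto
  have "A $$ (i, j) \<noteq> A $$ (i', j)" using unique[of i i'] ii' by blast
  with entries[OF ii'(1,4)] entries[OF ii'(2,5)]
  have signs: "A $$ (i, j) = 1 \<and> A $$ (i', j) = -1 \<or> A $$ (i, j) = -1 \<and> A $$ (i', j) = 1"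
    by auto
  have others: "A $$ (k, j) = 0" if k: "k < n" "k \<notin> {i, i'}" for k
  proof (rule ccontr)
    assume nz: "A $$ (k, j) \<noteq> 0"
    with entries[OF k(1)] signs have "A $$ (k, j) = A $$ (i, j) \<or> A $$ (k, j) = A $$ (i', j)"
      by auto
    then show False using unique[OF _ nz k(1) ii'(1)] unique[OF _ nz k(1) ii'(2)] k(2) by blast
  qed
  have "(\<Sum>k<n. A $$ (k, j)) = (\<Sum>k\<in>{i, i'}. A $$ (k, j))"
    by (rule sum.mono_neutral_right) (use ii' others in auto)
  then show ?thesis using signs ii'(3) by auto
qed

theorem det_incidence_like:
  fixes A :: "'a::idom mat"
  assumes "A \<in> carrier_mat n n" and "incidence_like A"
  shows "det A \<in> {0, 1, -1}"
  using assms
proof (induction n arbitrary: A)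
  case 0
  then show ?case by simp
next
  case (Suc n)
  note A = Suc.prems(1)
  show ?case
  proof (cases "\<exists>j<Suc n. \<forall>i<Suc n. \<forall>i'<Suc n. A $$ (i, j) \<noteq> 0 \<longrightarrow> A $$ (i', j) \<noteq> 0 \<longrightarrow> i = i'")
    case True
    then obtain j where j: "j < Suc n"
      and single: "\<And>i i'. i < Suc n \<Longrightarrow> i' < Suc n \<Longrightarrow> A $$ (i, j) \<noteq> 0 \<Longrightarrow> A $$ (i', j) \<noteq> 0 \<Longrightarrow> i = i'"
      by blast
    show ?thesis
    proof (cases "\<exists>i<Suc n. A $$ (i, j) \<noteq> 0")
      case False
      then show ?thesis by (simp add: laplace_expansion_column[OF A j])
    next
      case True
      then obtain i where i: "i < Suc n" "A $$ (i, j) \<noteq> 0" by blast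
      have "det A = (\<Sum>k\<in>{i}. A $$ (k, j) * cofactor A k j)"
        unfolding laplace_expansion_column[OF A j]
        by (rule sum.mono_neutral_right) (use i single in auto)
      then have det_eq: "det A = (A $$ (i, j) * (-1) ^ (i + j)) * det (mat_delete A i j)"
        by (simp add: cofactor_def mult.assoc)
      have "A $$ (i, j) \<in> {1, -1}"
        using incidence_like_entry[OF Suc.prems(2), of i j] A i j by auto
      moreover have "(-1) ^ (i + j) \<in> {1, -1::'a}" by (cases "even (i + j)") auto
      ultimately have "A $$ (i, j) * (-1) ^ (i + j) \<in> {1, -1}" by auto
      moreover have "det (mat_delete A i j) \<in> {0, 1, -1}"
        using Suc.IH[OF _ incidence_like_mat_delete[OF A Suc.prems(2) i(1) j]] mat_delete_carrier[OF A] by simp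
      ultimately show ?thesis unfolding det_eq by auto
    qed
  next
    case False
    have "(\<Sum>k<Suc n. A $$ (k, j)) = 0" if j: "j < Suc n" for j
    proof -
      from False j obtain i i' where "i < Suc n" "i' < Suc n" "i \<noteq> i'" "A $$ (i, j) \<noteq> 0" "A $$ (i', j) \<noteq> 0"
        by blast
      then show ?thesis by (rule incidence_like_col_sum_eq_0[OF Suc.prems(2) A j])
    qed
    then have "det A = 0" using det_eq_0_if_col_sums_0[OF A] by simp
    then show ?thesis by simp
  qed
qed

section \<open>Incidence matrices and the matrix-tree theorem\<close>

definition incidence :: "nat \<Rightarrow> nat set \<Rightarrow> 'a::ring_1" where
  "incidence u e = (if u = Min e then 1 else if u = Max e then -1 else 0)"

text \<open>Row i belongs to vertex i+1; the row of the grounded vertex n+1 is left out.\<close>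

definition incidence_mat :: "nat \<Rightarrow> nat set list \<Rightarrow> 'a::ring_1 mat" where
  "incidence_mat n es = mat n (length es) (\<lambda>(i, k). incidence (Suc i) (es ! k))"

definition reduced_laplacian :: "nat \<Rightarrow> nat set list \<Rightarrow> (nat set \<Rightarrow> 'a::comm_ring_1) \<Rightarrow> 'a mat" where
  "reduced_laplacian n es w =
     incidence_mat n es * mat_diag (length es) (\<lambda>k. w (es ! k)) * transpose_mat (incidence_mat n es)"

definition edge_on :: "nat set \<Rightarrow> nat set \<Rightarrow> bool" where
  "edge_on V e \<longleftrightarrow> (\<exists>i j. e = {i, j} \<and> i \<noteq> j \<and> i \<in> V \<and> j \<in> V)"

lemma reduced_laplacian_carrier: "reduced_laplacian n es w \<in> carrier_mat n n"
proof -
  have "incidence_mat n es \<in> carrier_mat n (length es)" by (simp add: incidence_mat_def)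
  then show ?thesis
    unfolding reduced_laplacian_def by (intro mult_carrier_mat[of _ n "length es"]) auto
qed

lemma edge_on_Min_Max:
  assumes "edge_on V e"
  shows "Min e \<noteq> Max e" "Min e \<in> V" "Max e \<in> V" "e = {Min e, Max e}"
proof -
  from assms obtain i j where "e = {i, j}" "i \<noteq> j" "i \<in> V" "j \<in> V"
    unfolding edge_on_def by blast
  then show "Min e \<noteq> Max e" "Min e \<in> V" "Max e \<in> V" "e = {Min e, Max e}"
    by (cases "i \<le> j"; auto simp: min_def max_def)+
qed

text \<open>A vector v read as a function on the vertices 1..n+1, vanishing at vertex n+1.\<close>

definition potential :: "nat \<Rightarrow> 'a vec \<Rightarrow> nat \<Rightarrow> 'a::zero" where
  "potential n v u = (if 1 \<le> u \<and> u \<le> n then v $ (u - 1) else 0)"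

lemma sum_indicator_eq_potential:
  "(\<Sum>i<n. if Suc i = u then v $ i else 0) = potential n v u"
proof (cases "1 \<le> u \<and> u \<le> n")
  case True
  then have "(\<Sum>i<n. if Suc i = u then v $ i else 0) = (\<Sum>i<n. if i = u - 1 then v $ i else 0)"
    by (intro sum.cong) auto
  then show ?thesis using True by (auto simp: potential_def)
next
  case False
  then show ?thesis by (auto simp: potential_def intro!: sum.neutral)
qed

lemma incidence_mat_transpose_mult_vec:
  fixes v :: "'a::comm_ring_1 vec"
  assumes k: "k < length es" and v: "v \<in> carrier_vec n" and "Min (es ! k) \<noteq> Max (es ! k)"
  shows "(transpose_mat (incidence_mat n es) *\<^sub>v v) $ k
           = potential n v (Min (es ! k)) - potential n v (Max (es ! k))"
proof -
  have "(transpose_mat (incidence_mat n es) *\<^sub>v v) $ k = (\<Sum>i<n. incidence (Suc i) (es ! k) * v $ i)"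
    using k v by (auto simp: incidence_mat_def scalar_prod_def lessThan_atLeast0 intro!: sum.cong)
  also have "\<dots> = (\<Sum>i<n. (if Suc i = Min (es ! k) then v $ i else 0) - (if Suc i = Max (es ! k) then v $ i else 0))"
    using assms(3) by (intro sum.cong) (auto simp: incidence_def)
  finally show ?thesis by (simp add: sum_subtractf sum_indicator_eq_potential)
qed

lemma eq_along_edge_paths:
  assumes "(a, b) \<in> (edge_rel S)\<^sup>*" and "\<And>e. e \<in> S \<Longrightarrow> x (Min e) = x (Max e)"
  shows "x a = x b"
  using assms(1)
proof (induction rule: rtrancl_induct)
  case (step y z)
  then have "{y, z} \<in> S" by (simp add: edge_rel_def)
  then have "x (Min {y, z}) = x (Max {y, z})" by (rule assms(2))
  then show ?case using step.IH by (cases "y \<le> z") (auto simp: min_def max_def)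
qed simp

lemma potential_eq_0_if_connected:
  assumes v: "v \<in> carrier_vec n" and conn: "connected_on (Suc n) S"
    and const: "\<And>e. e \<in> S \<Longrightarrow> potential n v (Min e) = potential n v (Max e)"
  shows "v = 0\<^sub>v n"
proof (rule eq_vecI)
  fix i assume "i < dim_vec (0\<^sub>v n)"
  then have i: "i < n" by simp
  then have "(Suc i, Suc n) \<in> (edge_rel S)\<^sup>*" using conn unfolding connected_on_def by auto
  then have "potential n v (Suc i) = potential n v (Suc n)" using const by (rule eq_along_edge_paths)
  then show "v $ i = 0\<^sub>v n $ i" using i by (simp add: potential_def)
qed (use v in simp)

lemma incidence_mat_transpose_kernel_trivial:
  fixes v :: "'a::comm_ring_1 vec"
  assumes "\<forall>e\<in>set es. edge_on {1..Suc n} e" and "connected_on (Suc n) (set es)"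
    and v: "v \<in> carrier_vec n" and "transpose_mat (incidence_mat n es) *\<^sub>v v = 0\<^sub>v (length es)"
  shows "v = 0\<^sub>v n"
proof (rule potential_eq_0_if_connected[OF v assms(2)])
  fix e assume "e \<in> set es"
  then obtain k where k: "k < length es" "e = es ! k" by (auto simp: in_set_conv_nth)
  then have "edge_on {1..Suc n} (es ! k)" using assms(1) by simp
  then have "Min (es ! k) \<noteq> Max (es ! k)" by (rule edge_on_Min_Max(1))
  with incidence_mat_transpose_mult_vec[OF k(1) v this] assms(4) k
  show "potential n v (Min e) = potential n v (Max e)"
    by (metis index_zero_vec(1) eq_iff_diff_eq_0)
qed

text \<open>In characteristic 2 the entries 1 and -1 of a column would coincide.\<close>

lemma incidence_like_incidence_mat:
  "incidence_like (incidence_mat n es :: 'a::{ring_1, ring_char_0} mat)"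
proof -
  have "(1::'a) \<noteq> -1" by (metis one_neq_neg_one)
  then show ?thesis
    by (auto simp: incidence_like_def incidence_mat_def incidence_def split: if_splits)
qed

lemma det_incidence_mat_neq_0_if_connected:
  assumes "length fs = n" and "\<forall>e\<in>set fs. edge_on {1..Suc n} e" and "connected_on (Suc n) (set fs)"
  shows "det (incidence_mat n fs :: 'a::idom mat) \<noteq> 0"
proof
  have D: "(incidence_mat n fs :: 'a mat) \<in> carrier_mat n n"
    using assms(1) by (simp add: incidence_mat_def)
  assume "det (incidence_mat n fs :: 'a mat) = 0"
  then obtain v :: "'a vec" where v: "v \<in> carrier_vec n" "v \<noteq> 0\<^sub>v n"
    and kernel: "transpose_mat (incidence_mat n fs) *\<^sub>v v = 0\<^sub>v n"
    using det_eq_0_iff_transpose_kernel[OF D] by blast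
  have "v = 0\<^sub>v n"
    by (rule incidence_mat_transpose_kernel_trivial[OF assms(2,3) v(1)]) (use kernel assms(1) in simp)
  with v(2) show False ..
qed

lemma det_incidence_mat_eq_0_if_disconnected:
  assumes "length fs = n" and edges: "\<forall>e\<in>set fs. edge_on {1..Suc n} e"
    and "\<not> connected_on (Suc n) (set fs)"
  shows "det (incidence_mat n fs :: 'a::idom mat) = 0"
proof -
  let ?D = "incidence_mat n fs :: 'a mat"
  let ?R = "{u. (Suc n, u) \<in> (edge_rel (set fs))\<^sup>*}"
  have sym: "sym ((edge_rel (set fs))\<^sup>*)"
    by (intro sym_rtrancl) (auto simp: sym_def edge_rel_def insert_commute)
  obtain u where u: "u \<in> {1..Suc n}" "u \<notin> ?R"
  proof (rule ccontr)
    assume "\<not> thesis"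
    then have "\<forall>u\<in>{1..Suc n}. (Suc n, u) \<in> (edge_rel (set fs))\<^sup>*" using that by blast
    then have "connected_on (Suc n) (set fs)"
      unfolding connected_on_def by (meson sym rtrancl_trans symD)
    with assms(3) show False ..
  qed
  define v where "v = vec n (\<lambda>i. if Suc i \<in> ?R then 0 else (1::'a))"
  have v: "v \<in> carrier_vec n" by (simp add: v_def)
  have "u \<noteq> Suc n" using u by auto
  then have "v $ (u - 1) = 1" using u by (auto simp: v_def)
  then have "v \<noteq> 0\<^sub>v n" using u \<open>u \<noteq> Suc n\<close> by auto
  have potential_v: "potential n v w = (if w \<in> ?R then 0 else 1)" if "w \<in> {1..Suc n}" for w
    using that by (cases "w = Suc n") (auto simp: potential_def v_def)
  have "transpose_mat ?D *\<^sub>v v = 0\<^sub>v n"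
  proof (rule eq_vecI)
    fix k assume "k < dim_vec (0\<^sub>v n :: 'a vec)"
    then have k: "k < length fs" using assms(1) by simp
    let ?a = "Min (fs ! k)" and ?b = "Max (fs ! k)"
    have "fs ! k \<in> set fs" using k by simp
    then have e: "?a \<noteq> ?b" "?a \<in> {1..Suc n}" "?b \<in> {1..Suc n}" "{?a, ?b} \<in> set fs"
      using edge_on_Min_Max[of "{1..Suc n}" "fs ! k"] edges by auto
    then have "(?a, ?b) \<in> edge_rel (set fs)" "(?b, ?a) \<in> edge_rel (set fs)"
      by (auto simp: edge_rel_def insert_commute)
    then have "?a \<in> ?R \<longleftrightarrow> ?b \<in> ?R" by (auto intro: rtrancl_into_rtrancl)
    then show "(transpose_mat ?D *\<^sub>v v) $ k = 0\<^sub>v n $ k"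
      using incidence_mat_transpose_mult_vec[OF k v e(1)] potential_v e(2,3) k assms(1) by simp
  qed (simp add: assms(1) incidence_mat_def)
  moreover have D: "?D \<in> carrier_mat n n" using assms(1) by (simp add: incidence_mat_def)
  ultimately show ?thesis
    using det_eq_0_iff_transpose_kernel[OF D] v \<open>v \<noteq> 0\<^sub>v n\<close> by blast
qed

lemma det_incidence_mat_squared:
  fixes fs :: "nat set list"
  assumes "length fs = n" and "\<forall>e\<in>set fs. edge_on {1..Suc n} e"
  shows "(det (incidence_mat n fs) :: 'a::{idom, ring_char_0}) ^ 2
           = (if connected_on (Suc n) (set fs) then 1 else 0)"
proof -
  have "incidence_mat n fs \<in> carrier_mat n n"
    using assms(1) by (simp add: incidence_mat_def)
  then have "det (incidence_mat n fs :: 'a mat) \<in> {0, 1, -1}"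
    by (rule det_incidence_like[OF _ incidence_like_incidence_mat])
  then show ?thesis
    using det_incidence_mat_neq_0_if_connected[OF assms, where 'a='a]
      det_incidence_mat_eq_0_if_disconnected[OF assms, where 'a='a]
    by auto
qed

lemma sum_subsets_nth_image:
  assumes "distinct es"
  shows "(\<Sum>K | K \<subseteq> {0..<length es} \<and> card K = n. f ((!) es ` K))
           = (\<Sum>T | T \<subseteq> set es \<and> card T = n. f T)"
proof (rule sum.reindex_bij_betw)
  have bij: "bij_betw ((!) es) {0..<length es} (set es)"
    using assms by (simp add: bij_betw_nth atLeast0LessThan)
  then have inj: "inj_on ((!) es) K" if "K \<subseteq> {0..<length es}" for K
    using that by (auto simp: bij_betw_def intro: inj_on_subset)
  show "bij_betw ((`) ((!) es)) {K. K \<subseteq> {0..<length es} \<and> card K = n} {T. T \<subseteq> set es \<and> card T = n}"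
  proof (rule bij_betw_subset[OF bij_betw_Pow[OF bij]])
    show "((`) ((!) es)) ` {K. K \<subseteq> {0..<length es} \<and> card K = n} = {T. T \<subseteq> set es \<and> card T = n}"
    proof
      show "((`) ((!) es)) ` {K. K \<subseteq> {0..<length es} \<and> card K = n} \<subseteq> {T. T \<subseteq> set es \<and> card T = n}"
        using inj by (auto simp: card_image)
      show "{T. T \<subseteq> set es \<and> card T = n} \<subseteq> ((`) ((!) es)) ` {K. K \<subseteq> {0..<length es} \<and> card K = n}"
      proof
        fix T assume "T \<in> {T. T \<subseteq> set es \<and> card T = n}"
        then have T: "T \<subseteq> set es" "card T = n" by auto
        have "T \<in> (`) ((!) es) ` Pow {0..<length es}"
          using bij_betw_Pow[OF bij] T(1) by (simp add: bij_betw_def)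
        then obtain K where K: "K \<subseteq> {0..<length es}" "T = (!) es ` K" by blast
        moreover have "card K = n" using T K card_image[OF inj[OF K(1)]] by simp
        ultimately show "T \<in> ((`) ((!) es)) ` {K. K \<subseteq> {0..<length es} \<and> card K = n}" by blast
      qed
    qed
  qed auto
qed

lemma reduced_laplacian_cauchy_binet_term:
  fixes w :: "nat set \<Rightarrow> 'a::{idom, ring_char_0}"
  assumes dist: "distinct es" and edges: "\<forall>e\<in>set es. edge_on {1..Suc n} e"
    and K: "K \<subseteq> {0..<length es}" "card K = n"
  defines "D \<equiv> incidence_mat n es :: 'a mat" and "ks \<equiv> sorted_list_of_set K"
  shows "det (col_submat (D * mat_diag (length es) (\<lambda>k. w (es ! k))) n ((!) ks))
           * det (row_submat (transpose_mat D) n ((!) ks))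
         = (if connected_on (Suc n) ((!) es ` K) then \<Prod>e\<in>(!) es ` K. w e else 0)"
proof -
  define fs where "fs = map ((!) es) ks"
  have "finite K" using K(1) by (rule finite_subset) simp
  then have ks: "length ks = n" "set ks = K" "distinct ks"
    using K(2) by (simp_all add: ks_def)
  then have ks_bound: "ks ! j < length es" if "j < n" for j
    using K(1) that by (metis atLeastLessThan_iff nth_mem subsetD)
  have "inj_on ((!) es) K" by (rule inj_on_nth[OF dist]) (use K(1) in auto)
  then have fs: "length fs = n" "set fs = (!) es ` K" "distinct fs"
    using ks by (auto simp: fs_def distinct_map)
  have fs_sub: "set fs \<subseteq> set es" using fs(2) K(1) by auto
  let ?F = "incidence_mat n fs :: 'a mat"
  have F: "?F \<in> carrier_mat n n" using fs(1) by (simp add: incidence_mat_def)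
  have D: "D \<in> carrier_mat n (length es)" by (simp add: D_def incidence_mat_def)
  have "col_submat (D * mat_diag (length es) (\<lambda>k. w (es ! k))) n ((!) ks)
      = mat n n (\<lambda>(i, j). incidence (Suc i) (fs ! j) * w (fs ! j))"
    unfolding mat_diag_mult_right[OF D]
    by (rule eq_matI) (simp_all add: col_submat_def D_def incidence_mat_def fs_def ks_bound ks(1))
  also have "\<dots> = ?F * mat_diag n (\<lambda>j. w (fs ! j))"
    unfolding mat_diag_mult_right[OF F]
    by (rule eq_matI) (simp_all add: incidence_mat_def fs(1))
  finally have "col_submat (D * mat_diag (length es) (\<lambda>k. w (es ! k))) n ((!) ks)
      = ?F * mat_diag n (\<lambda>j. w (fs ! j))" .
  moreover have "row_submat (transpose_mat D) n ((!) ks) = transpose_mat ?F"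
    by (rule eq_matI) (auto simp: D_def row_submat_def incidence_mat_def fs_def ks_bound ks(1))
  moreover have "(\<Prod>j = 0..<n. w (fs ! j)) = (\<Prod>e\<in>set fs. w e)"
    by (rule prod.reindex_bij_betw) (use fs in \<open>simp add: bij_betw_nth atLeast0LessThan\<close>)
  moreover have "det (?F * mat_diag n (\<lambda>j. w (fs ! j))) = det ?F * (\<Prod>j = 0..<n. w (fs ! j))"
    by (simp add: det_mult[OF F mat_diag_dim] det_mat_diag)
  moreover have "det (transpose_mat ?F) = det ?F" by (rule det_transpose[OF F])
  ultimately have "det (col_submat (D * mat_diag (length es) (\<lambda>k. w (es ! k))) n ((!) ks))
           * det (row_submat (transpose_mat D) n ((!) ks))
         = det ?F ^ 2 * (\<Prod>e\<in>set fs. w e)"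
    by (simp add: power2_eq_square)
  also have "det ?F ^ 2 = (if connected_on (Suc n) (set fs) then 1 else 0)"
    using edges fs_sub by (intro det_incidence_mat_squared[OF fs(1)]) auto
  finally show ?thesis using fs(2) by simp
qed

theorem matrix_tree:
  fixes w :: "nat set \<Rightarrow> 'a::{idom, ring_char_0}"
  assumes dist: "distinct es" and edges: "\<forall>e\<in>set es. edge_on {1..Suc n} e"
  shows "det (reduced_laplacian n es w) = M (Suc n) (set es) w"
proof -
  let ?D = "incidence_mat n es :: 'a mat"
  let ?W = "mat_diag (length es) (\<lambda>k. w (es ! k))"
  let ?term = "\<lambda>T. if connected_on (Suc n) T then \<Prod>e\<in>T. w e else 0"
  have D: "?D \<in> carrier_mat n (length es)" by (simp add: incidence_mat_def)
  have "det (reduced_laplacian n es w)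
      = (\<Sum>K | K \<subseteq> {0..<length es} \<and> card K = n.
           det (col_submat (?D * ?W) n ((!) (sorted_list_of_set K)))
           * det (row_submat (transpose_mat ?D) n ((!) (sorted_list_of_set K))))"
    unfolding reduced_laplacian_def by (rule cauchy_binet) (use D in \<open>auto intro: mult_carrier_mat\<close>)
  also have "\<dots> = (\<Sum>K | K \<subseteq> {0..<length es} \<and> card K = n. ?term ((!) es ` K))"
  proof (rule sum.cong[OF refl])
    fix K assume "K \<in> {K. K \<subseteq> {0..<length es} \<and> card K = n}"
    then show "det (col_submat (?D * ?W) n ((!) (sorted_list_of_set K)))
           * det (row_submat (transpose_mat ?D) n ((!) (sorted_list_of_set K))) = ?term ((!) es ` K)"
      using reduced_laplacian_cauchy_binet_term[OF dist edges, of K w] by simp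
  qed
  also have "\<dots> = (\<Sum>T | T \<subseteq> set es \<and> card T = n. ?term T)"
    by (rule sum_subsets_nth_image[OF dist])
  also have "\<dots> = (\<Sum>T\<in>{T. T \<subseteq> set es \<and> card T = n} \<inter> {T. connected_on (Suc n) T}. \<Prod>e\<in>T. w e)"
    by (subst sum.inter_restrict) (auto intro: finite_subset[of _ "Pow (set es)"])
  also have "{T. T \<subseteq> set es \<and> card T = n} \<inter> {T. connected_on (Suc n) T} = spanning_trees (Suc n) (set es)"
    by (auto simp: spanning_trees_def)
  finally show ?thesis by (simp add: M_def)
qed

lemma weighted_norms_sum_eq_0:
  fixes c z :: "nat \<Rightarrow> complex"
  assumes sum: "(\<Sum>k<m. c k * (z k * cnj (z k))) = 0" and pos: "\<forall>k<m. 0 < Re (c k)" and "k < m"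
  shows "z k = 0"
proof -
  have re_term: "Re (c k * (z k * cnj (z k))) = Re (c k) * (cmod (z k))\<^sup>2" for k
    by (simp add: complex_mult_cnj cmod_power2)
  have "(\<Sum>k<m. Re (c k) * (cmod (z k))\<^sup>2) = Re (\<Sum>k<m. c k * (z k * cnj (z k)))"
    unfolding Re_sum by (intro sum.cong refl) (rule re_term[symmetric])
  then have "(\<Sum>k<m. Re (c k) * (cmod (z k))\<^sup>2) = 0"
    using sum by simp
  moreover have "\<forall>k\<in>{..<m}. 0 \<le> Re (c k) * (cmod (z k))\<^sup>2"
    using pos by (simp add: less_imp_le)
  ultimately have "Re (c k) * (cmod (z k))\<^sup>2 = 0"
    using sum_nonneg_eq_0_iff[of "{..<m}" "\<lambda>k. Re (c k) * (cmod (z k))\<^sup>2"] \<open>k < m\<close> by simp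
  moreover have "0 < Re (c k)" using pos \<open>k < m\<close> by blast
  ultimately have "cmod (z k) = 0" by simp
  then show ?thesis by simp
qed

lemma reduced_laplacian_mult_vec:
  fixes v :: "'a::comm_ring_1 vec"
  assumes v: "v \<in> carrier_vec n" and i: "i < n"
  shows "(reduced_laplacian n es w *\<^sub>v v) $ i
           = (\<Sum>k<length es. incidence (Suc i) (es ! k) * (w (es ! k) * (transpose_mat (incidence_mat n es) *\<^sub>v v) $ k))"
proof -
  let ?m = "length es"
  let ?D = "incidence_mat n es :: 'a mat"
  let ?W = "mat_diag ?m (\<lambda>k. w (es ! k))"
  define y where "y = transpose_mat ?D *\<^sub>v v"
  have D: "?D \<in> carrier_mat n ?m" by (simp add: incidence_mat_def)
  have y: "y \<in> carrier_vec ?m" unfolding y_def using D v by (intro mult_mat_vec_carrier) auto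
  define x where "x = ?W *\<^sub>v y"
  have x: "x \<in> carrier_vec ?m" unfolding x_def by (rule mult_mat_vec_carrier[OF mat_diag_dim y])
  have x_entry: "x $ k = w (es ! k) * y $ k" if "k < ?m" for k
    using that y by (auto simp: x_def mat_diag_def scalar_prod_def if_distrib[of "\<lambda>x. x * _"] cong: if_cong)
  have DW: "?D * ?W \<in> carrier_mat n ?m" using D by simp
  have "reduced_laplacian n es w *\<^sub>v v = (?D * ?W) *\<^sub>v y"
    unfolding reduced_laplacian_def y_def by (rule assoc_mult_mat_vec[OF DW _ v]) (use D in simp)
  also have "\<dots> = ?D *\<^sub>v x" unfolding x_def by (rule assoc_mult_mat_vec[OF D mat_diag_dim y])
  finally have "(reduced_laplacian n es w *\<^sub>v v) $ i = (\<Sum>k<?m. incidence (Suc i) (es ! k) * x $ k)"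
    using i x by (simp add: incidence_mat_def scalar_prod_def lessThan_atLeast0)
  also have "\<dots> = (\<Sum>k<?m. incidence (Suc i) (es ! k) * (w (es ! k) * y $ k))"
    by (intro sum.cong refl) (simp add: x_entry)
  finally show ?thesis by (simp add: y_def)
qed

lemma reduced_laplacian_quadratic_form:
  fixes es :: "nat set list" and w :: "nat set \<Rightarrow> complex" and v :: "complex vec"
  assumes v: "v \<in> carrier_vec n"
  defines "y \<equiv> transpose_mat (incidence_mat n es) *\<^sub>v v"
  shows "(\<Sum>i<n. cnj (v $ i) * (reduced_laplacian n es w *\<^sub>v v) $ i)
           = (\<Sum>k<length es. w (es ! k) * (y $ k * cnj (y $ k)))"
proof -
  let ?m = "length es"
  have y_entry: "y $ k = (\<Sum>i<n. incidence (Suc i) (es ! k) * v $ i)" if "k < ?m" for k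
    using that v by (auto simp: y_def incidence_mat_def scalar_prod_def lessThan_atLeast0 intro: sum.cong)
  have "(\<Sum>i<n. cnj (v $ i) * (reduced_laplacian n es w *\<^sub>v v) $ i)
      = (\<Sum>i<n. cnj (v $ i) * (\<Sum>k<?m. incidence (Suc i) (es ! k) * (w (es ! k) * y $ k)))"
    by (intro sum.cong refl) (simp add: reduced_laplacian_mult_vec[OF v] y_def)
  also have "\<dots> = (\<Sum>i<n. \<Sum>k<?m. w (es ! k) * y $ k * (incidence (Suc i) (es ! k) * cnj (v $ i)))"
    by (simp add: sum_distrib_left mult_ac)
  also have "\<dots> = (\<Sum>k<?m. \<Sum>i<n. w (es ! k) * y $ k * (incidence (Suc i) (es ! k) * cnj (v $ i)))"
    by (rule sum.swap)
  also have "\<dots> = (\<Sum>k<?m. w (es ! k) * y $ k * (\<Sum>i<n. incidence (Suc i) (es ! k) * cnj (v $ i)))"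
    by (simp add: sum_distrib_left)
  also have "\<dots> = (\<Sum>k<?m. w (es ! k) * (y $ k * cnj (y $ k)))"
  proof (intro sum.cong refl)
    fix k assume "k \<in> {..<?m}"
    have "cnj (incidence u e) = incidence u e" for u e by (simp add: incidence_def)
    then have "cnj (y $ k) = (\<Sum>i<n. incidence (Suc i) (es ! k) * cnj (v $ i))"
      using \<open>k \<in> {..<?m}\<close> by (simp add: y_entry cnj_sum)
    then show "w (es ! k) * y $ k * (\<Sum>i<n. incidence (Suc i) (es ! k) * cnj (v $ i))
        = w (es ! k) * (y $ k * cnj (y $ k))" by (simp add: mult_ac)
  qed
  finally show ?thesis .
qed

lemma det_reduced_laplacian_neq_0:
  fixes w :: "nat set \<Rightarrow> complex"
  assumes edges: "\<forall>e\<in>set es. edge_on {1..Suc n} e" and conn: "connected_on (Suc n) (set es)"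
    and pos: "\<forall>e\<in>set es. 0 < Re (w e)"
  shows "det (reduced_laplacian n es w) \<noteq> 0"
proof
  assume "det (reduced_laplacian n es w) = 0"
  then obtain v where v: "v \<in> carrier_vec n" "v \<noteq> 0\<^sub>v n" and Lv: "reduced_laplacian n es w *\<^sub>v v = 0\<^sub>v n"
    using det_0_iff_vec_prod_zero[OF reduced_laplacian_carrier] by blast
  let ?y = "transpose_mat (incidence_mat n es) *\<^sub>v v"
  have "(\<Sum>k<length es. w (es ! k) * (?y $ k * cnj (?y $ k))) = 0"
    using reduced_laplacian_quadratic_form[OF v(1), of es w] Lv by simp
  then have "?y $ k = 0" if "k < length es" for k
    by (rule weighted_norms_sum_eq_0[OF _ _ that]) (use pos in simp)
  then have "?y = 0\<^sub>v (length es)" by (intro eq_vecI) (auto simp: incidence_mat_def)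
  then have "v = 0\<^sub>v n" by (rule incidence_mat_transpose_kernel_trivial[OF edges conn v(1)])
  with v(2) show False ..
qed

section \<open>The roots of M(Gamma(t))\<close>

lemma M_scale: "M N E (\<lambda>e. c * w e) = c ^ (N - 1) * M N E w"
  unfolding M_def sum_distrib_left
  by (rule sum.cong[OF refl]) (simp add: prod.distrib spanning_trees_def)

lemma M_neq_0_if_Re_pos:
  fixes w :: "nat set \<Rightarrow> complex"
  assumes edges: "\<forall>e\<in>E. edge_on {1..N} e" and conn: "connected_on N E"
    and pos: "\<forall>e\<in>E. 0 < Re (w e)"
  shows "M N E w \<noteq> 0"
proof (cases N)
  case 0
  then have "E = {}" using edges by (auto simp: edge_on_def)
  then have "spanning_trees N E = {{}}" using 0 by (auto simp: spanning_trees_def connected_on_def)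
  then show ?thesis by (simp add: M_def)
next
  case (Suc n)
  have "E \<subseteq> Pow {1..N}" using edges by (auto simp: edge_on_def)
  then have "finite E" by (rule finite_subset) simp
  then obtain es where es: "set es = E" "distinct es" using finite_distinct_list by blast
  have "det (reduced_laplacian n es w) \<noteq> 0"
    using det_reduced_laplacian_neq_0[of es n w] edges conn pos es(1) Suc by simp
  then show ?thesis using matrix_tree[OF es(2), of n w] edges es(1) Suc by simp
qed

interpretation of_real_poly_hom: map_poly_comm_ring_hom "of_real :: real \<Rightarrow> complex" ..

definition Gamma_weight :: "(nat set \<Rightarrow> real) \<Rightarrow> complex \<Rightarrow> nat set \<Rightarrow> complex" where
  "Gamma_weight \<gamma> z e = (if 0 < \<gamma> e then of_real (\<gamma> e) else of_real (\<gamma> e) * z)"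

lemma poly_M_Gamma_poly: "poly (map_poly of_real (M_Gamma_poly N E \<gamma>)) z = M N E (Gamma_weight \<gamma> z)"
proof -
  have "poly (map_poly of_real [:0, a:]) z = of_real a * z" for a
    by (cases "a = 0") (simp_all add: map_poly_pCons)
  then show ?thesis
    unfolding M_Gamma_poly_def M_def of_real_poly_hom.hom_sum poly_hom.hom_sum
      of_real_poly_hom.hom_prod poly_hom.hom_prod
    by (intro sum.cong prod.cong refl) (simp add: Gamma_t_weight_def Gamma_weight_def)
qed

lemma Re_less_cmod_unless_nonneg_real:
  assumes "\<not> (z \<in> \<real> \<and> 0 \<le> Re z)"
  shows "Re z < cmod z"
proof (cases "Im z = 0")
  case True
  then have "Re z < 0" using assms complex_is_Real_iff by auto
  then show ?thesis by (smt (verit) norm_ge_zero)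
next
  case False
  then have "(Re z)\<^sup>2 < (cmod z)\<^sup>2" by (simp add: cmod_def)
  then show ?thesis by (meson abs_ge_self le_less_trans power2_less_imp_less norm_ge_zero)
qed

lemma rotate_into_left_half_plane:
  fixes z :: complex
  assumes "\<not> (z \<in> \<real> \<and> 0 \<le> Re z)"
  obtains c where "0 < Re c" and "Re (c * z) < 0"
proof
  have lt: "Re z < cmod z" using Re_less_cmod_unless_nonneg_real[OF assms] .
  show "0 < Re (of_real (cmod z) - cnj z)" using lt by simp
  have "Re ((of_real (cmod z) - cnj z) * z) = cmod z * (Re z - cmod z)"
    by (simp add: cmod_def power2_eq_square algebra_simps)
  also have "\<dots> < 0" using lt by (intro mult_pos_neg) auto
  finally show "Re ((of_real (cmod z) - cnj z) * z) < 0" .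
qed

lemma Re_rotated_Gamma_weight_pos:
  assumes "0 < Re c" and "Re (c * z) < 0" and "\<gamma> e \<noteq> 0"
  shows "0 < Re (c * Gamma_weight \<gamma> z e)"
proof (cases "0 < \<gamma> e")
  case True
  then show ?thesis using assms(1) by (simp add: Gamma_weight_def)
next
  case False
  then have "\<gamma> e < 0" using assms(3) by simp
  moreover have "Re (c * Gamma_weight \<gamma> z e) = \<gamma> e * Re (c * z)"
    using False by (simp add: Gamma_weight_def algebra_simps)
  ultimately show ?thesis using assms(2) by (simp add: mult_neg_neg)
qed

theorem mainTheorem4:
  fixes N :: nat and E :: "nat set set" and \<gamma> :: "nat set \<Rightarrow> real"
  assumes "signed_graph N E \<gamma>"
    and "connected_on N E"
  shows "\<forall>z::complex. poly (map_poly complex_of_real (M_Gamma_poly N E \<gamma>)) z = 0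
           \<longrightarrow> z \<in> \<real> \<and> Re z \<ge> 0"
proof (intro allI impI)
  fix z :: complex
  assume "poly (map_poly complex_of_real (M_Gamma_poly N E \<gamma>)) z = 0"
  then have root: "M N E (Gamma_weight \<gamma> z) = 0" by (simp add: poly_M_Gamma_poly)
  have edges: "\<forall>e\<in>E. edge_on {1..N} e" and nonzero: "\<forall>e\<in>E. \<gamma> e \<noteq> 0"
    using assms(1) by (auto simp: signed_graph_def edge_on_def)
  show "z \<in> \<real> \<and> Re z \<ge> 0"
  proof (rule ccontr)
    assume "\<not> (z \<in> \<real> \<and> Re z \<ge> 0)"
    then obtain c where c: "0 < Re c" "Re (c * z) < 0" by (rule rotate_into_left_half_plane)
    then have "\<forall>e\<in>E. 0 < Re (c * Gamma_weight \<gamma> z e)"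
      using nonzero Re_rotated_Gamma_weight_pos[OF c] by blast
    then have "M N E (\<lambda>e. c * Gamma_weight \<gamma> z e) \<noteq> 0"
      by (rule M_neq_0_if_Re_pos[OF edges assms(2)])
    then show False using root by (simp add: M_scale)
  qed
qed

end
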